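(* Consider $f:\mathbb R^n\to\mathbb R$ convex and continuously differentiable, $A\in\mathbb R^{m\times n}$, $b\in\mathbb R^m$, and the parameters and algorithm described in the context. For the same initial points and parameters, a sequence $\{(x_k,\lambda_k)\}_{k\ge0}$ is generated by the algorithm (Case I, resp. Case II) if and only if for every $k\ge1$ it satisfies $x_{k+1}-\bar x_k=-\gamma\big[g_{k+1}+A^\top(\lambda_{k+1}+\alpha_k(\lambda_{k+1}-\lambda_k))+\beta A^\top(Ax_{k+1}-b)\big]$ and $\lambda_{k+1}-\bar\lambda_k=\delta\big[Ax_{k+1}-b+\alpha_kA(x_{k+1}-x_k)\big]$, where $g_{k+1}=\nabla f(x_{k+1})$ in Case I and $g_{k+1}=\nabla f(\bar x_k)$ in Case II.
   Context: Parameter sequence: $\{t_k\}_{k\ge1}$ is nondecreasing, $t_1=1$, $t_k>1$ for all $k>2$, $t_k\to+\infty$, and $t_{k+1}^2-t_k^2\le\rho t_{k+1}$ for all $k\ge 1$, with fixed $\rho\in(0,1]$. Fix $\eta\in[\rho,1]$, $\gamma>0$, $\delta>0$, $\beta\ge0$. Algorithm: initial points $x_0=x_1\in\mathbb R^n$, $\lambda_0=\lambda_1\in\mathbb R^m$. For $k=1,2,\dots$: set $\alpha_k=(t_{k+1}-\eta)/\eta$, $c_k=t_{k+1}/\eta$, $\bar x_k=x_k+\frac{t_k-1}{t_{k+1}}(x_k-x_{k-1})$, $\bar\lambda_k=\lambda_k+\frac{t_k-1}{t_{k+1}}(\lambda_k-\lambda_{k-1})$, $p_k=c_k\bar\lambda_k-\alpha_k\lambda_k$,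 $r_k=\alpha_kAx_k+b$. Case I ($f$ convex and $C^1$): $x_{k+1}=\arg\min_{x}\{f(x)+\frac\beta2\|Ax-b\|^2+\frac1{2\gamma}\|x-\bar x_k\|^2+\langle p_k,Ax-b\rangle+\frac\delta2\|c_kAx-r_k\|^2\}$. Case II ($f$ convex with $L$-Lipschitz gradient, and $\gamma\le 1/L$): $x_{k+1}=\arg\min_{x}\{\langle\nabla f(\bar x_k),x\rangle+\frac\beta2\|Ax-b\|^2+\frac1{2\gamma}\|x-\bar x_k\|^2+\langle p_k,Ax-b\rangle+\frac\delta2\|c_kAx-r_k\|^2\}$. Then $\lambda_{k+1}=\bar\lambda_k+\delta(c_kAx_{k+1}-r_k)$. *)

theory Defs
  imports "HOL-Analysis.Analysis"
begin

definition alg_alpha :: "(nat \<Rightarrow> real) \<Rightarrow> real \<Rightarrow> nat \<Rightarrow> real" where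
  "alg_alpha t \<eta> k = (t (Suc k) - \<eta>) / \<eta>"

definition alg_c :: "(nat \<Rightarrow> real) \<Rightarrow> real \<Rightarrow> nat \<Rightarrow> real" where
  "alg_c t \<eta> k = t (Suc k) / \<eta>"

definition alg_bar :: "(nat \<Rightarrow> real) \<Rightarrow> (nat \<Rightarrow> 'a::real_vector) \<Rightarrow> nat \<Rightarrow> 'a" where
  "alg_bar t x k = x k + ((t k - 1) / t (Suc k)) *\<^sub>R (x k - x (k - 1))"

definition alg_p :: "(nat \<Rightarrow> real) \<Rightarrow> real \<Rightarrow> (nat \<Rightarrow> real^'m) \<Rightarrow> nat \<Rightarrow> real^'m" where
  "alg_p t \<eta> lam k = alg_c t \<eta> k *\<^sub>R alg_bar t lam k - alg_alpha t \<eta> k *\<^sub>R lam k"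

definition alg_r :: "(nat \<Rightarrow> real) \<Rightarrow> real \<Rightarrow> real^'n^'m \<Rightarrow> real^'m \<Rightarrow> (nat \<Rightarrow> real^'n) \<Rightarrow> nat \<Rightarrow> real^'m" where
  "alg_r t \<eta> A b x k = alg_alpha t \<eta> k *\<^sub>R (A *v x k) + b"

text \<open>Subproblem objective; the first argument is the (possibly linearized) smooth term.\<close>
definition alg_obj ::
  "(real^'n \<Rightarrow> real) \<Rightarrow> (nat \<Rightarrow> real) \<Rightarrow> real \<Rightarrow> real \<Rightarrow> real \<Rightarrow> real \<Rightarrow> real^'n^'m \<Rightarrow> real^'m
    \<Rightarrow> (nat \<Rightarrow> real^'n) \<Rightarrow> (nat \<Rightarrow> real^'m) \<Rightarrow> nat \<Rightarrow> real^'n \<Rightarrow> real" where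
  "alg_obj F t \<eta> \<gamma> \<delta> \<beta> A b x lam k y =
     F y + \<beta> / 2 * (norm (A *v y - b))\<^sup>2 + 1 / (2 * \<gamma>) * (norm (y - alg_bar t x k))\<^sup>2
     + inner (alg_p t \<eta> lam k) (A *v y - b)
     + \<delta> / 2 * (norm (alg_c t \<eta> k *\<^sub>R (A *v y) - alg_r t \<eta> A b x k))\<^sup>2"

definition alg_lam_update ::
  "(nat \<Rightarrow> real) \<Rightarrow> real \<Rightarrow> real \<Rightarrow> real^'n^'m \<Rightarrow> real^'m \<Rightarrow> (nat \<Rightarrow> real^'n) \<Rightarrow> (nat \<Rightarrow> real^'m) \<Rightarrow> nat \<Rightarrow> real^'m" where
  "alg_lam_update t \<eta> \<delta> A b x lam k =
     alg_bar t lam k + \<delta> *\<^sub>R (alg_c t \<eta> k *\<^sub>R (A *v x (Suc k)) - alg_r t \<eta> A b x k)"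

definition alg_generated ::
  "(nat \<Rightarrow> real^'n \<Rightarrow> real) \<Rightarrow> (nat \<Rightarrow> real) \<Rightarrow> real \<Rightarrow> real \<Rightarrow> real \<Rightarrow> real \<Rightarrow> real^'n^'m \<Rightarrow> real^'m
    \<Rightarrow> (nat \<Rightarrow> real^'n) \<Rightarrow> (nat \<Rightarrow> real^'m) \<Rightarrow> bool" where
  "alg_generated Fk t \<eta> \<gamma> \<delta> \<beta> A b x lam \<longleftrightarrow>
     (\<forall>k\<ge>1. is_arg_min (alg_obj (Fk k) t \<eta> \<gamma> \<delta> \<beta> A b x lam k) (\<lambda>_. True) (x (Suc k))
            \<and> lam (Suc k) = alg_lam_update t \<eta> \<delta> A b x lam k)"

text \<open>The characterizing equations (for k >= 1), with g k standing for g_{k+1}.\<close>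
definition alg_equations ::
  "(nat \<Rightarrow> real^'n) \<Rightarrow> (nat \<Rightarrow> real) \<Rightarrow> real \<Rightarrow> real \<Rightarrow> real \<Rightarrow> real \<Rightarrow> real^'n^'m \<Rightarrow> real^'m
    \<Rightarrow> (nat \<Rightarrow> real^'n) \<Rightarrow> (nat \<Rightarrow> real^'m) \<Rightarrow> bool" where
  "alg_equations g t \<eta> \<gamma> \<delta> \<beta> A b x lam \<longleftrightarrow>
     (\<forall>k\<ge>1.
       x (Suc k) - alg_bar t x k =
         - \<gamma> *\<^sub>R (g k + transpose A *v (lam (Suc k) + alg_alpha t \<eta> k *\<^sub>R (lam (Suc k) - lam k))
                    + \<beta> *\<^sub>R (transpose A *v (A *v x (Suc k) - b)))
       \<and> lam (Suc k) - alg_bar t lam k =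
         \<delta> *\<^sub>R (A *v x (Suc k) - b + alg_alpha t \<eta> k *\<^sub>R (A *v (x (Suc k) - x k))))"

end

theory Submission
  imports Defs
begin

text \<open>Each subproblem objective is convex and differentiable, so x_{k+1} minimizes it exactly
  when its gradient vanishes. Once the multiplier update is imposed, the multiplier part of that
  gradient, A^T (p_k + \<delta> c_k (c_k A x_{k+1} - r_k)), collapses to
  A^T (\<lambda>_{k+1} + \<alpha>_k (\<lambda>_{k+1} - \<lambda>_k)) because c_k = \<alpha>_k + 1, and the update itself is the
  second equation rewritten.\<close>

lemma convex_on_power2_norm: "convex_on UNIV (\<lambda>v::'a::real_inner. (norm v)\<^sup>2)"
proof (rule convex_onI)
  fix t :: real and a b :: 'a
  assume "0 < t" "t < 1"
  have "(1 - t) * (norm a)\<^sup>2 + t * (norm b)\<^sup>2 - (norm ((1 - t) *\<^sub>R a + t *\<^sub>R b))\<^sup>2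
      = t * (1 - t) * (norm (a - b))\<^sup>2"
    unfolding power2_norm_eq_inner
    by (simp add: inner_add_left inner_add_right inner_diff_left inner_diff_right inner_commute
        algebra_simps)
  moreover have "t * (1 - t) * (norm (a - b))\<^sup>2 \<ge> 0"
    using \<open>0 < t\<close> \<open>t < 1\<close> by simp
  ultimately show "(norm ((1 - t) *\<^sub>R a + t *\<^sub>R b))\<^sup>2 \<le> (1 - t) * (norm a)\<^sup>2 + t * (norm b)\<^sup>2"
    by linarith
qed simp

lemma linear_imp_convex_on:
  fixes h :: "'a::real_vector \<Rightarrow> real"
  assumes "linear h"
  shows "convex_on UNIV h"
  by (rule convex_onI) (simp_all add: linear_add[OF assms] linear_scale[OF assms])

lemma convex_on_compose_affine:
  fixes g :: "'b::real_vector \<Rightarrow> real"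
  assumes "convex_on UNIV g" and "linear L"
  shows "convex_on UNIV (\<lambda>y. g (L y - w))"
proof (rule convex_onI)
  fix t :: real and y z assume "0 < t" "t < 1"
  have "L ((1 - t) *\<^sub>R y + t *\<^sub>R z) = (1 - t) *\<^sub>R L y + t *\<^sub>R L z"
    using \<open>linear L\<close> by (simp add: linear_add linear_scale)
  then have "L ((1 - t) *\<^sub>R y + t *\<^sub>R z) - w = (1 - t) *\<^sub>R (L y - w) + t *\<^sub>R (L z - w)"
    by (simp add: algebra_simps)
  then show "g (L ((1 - t) *\<^sub>R y + t *\<^sub>R z) - w) \<le> (1 - t) * g (L y - w) + t * g (L z - w)"
    using convex_onD[OF assms(1), of t] \<open>0 < t\<close> \<open>t < 1\<close> by simp
qed simp

lemma convex_on_imp_above_linearization: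
  fixes G :: "'a::real_normed_vector \<Rightarrow> real"
  assumes convex: "convex_on UNIV G" and deriv: "(G has_derivative G') (at z)"
  shows "G z + G' (y - z) \<le> G y"
proof -
  define \<phi> where "\<phi> s = G (s *\<^sub>R (y - z) - (- z))" for s :: real
  have "convex_on UNIV \<phi>"
    unfolding \<phi>_def by (intro convex_on_compose_affine convex linear_scaleR_left)
  have "((\<lambda>s. s *\<^sub>R (y - z) - (- z)) has_derivative (\<lambda>s. s *\<^sub>R (y - z))) (at 0)"
    by (auto intro!: derivative_eq_intros)
  from has_derivative_compose[OF this] deriv
  have "(\<phi> has_derivative (\<lambda>s. G' (s *\<^sub>R (y - z)))) (at 0)"
    unfolding \<phi>_def by simp
  moreover have "G' (s *\<^sub>R (y - z)) = G' (y - z) * s" for s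
    using has_derivative_linear[OF deriv] by (simp add: linear_scale)
  ultimately have "(\<phi> has_field_derivative G' (y - z)) (at 0)"
    by (simp add: has_field_derivative_def)
  from convex_on_imp_above_tangent[OF \<open>convex_on UNIV \<phi>\<close> _ _ _ this, of 1]
  show ?thesis by (simp add: \<phi>_def)
qed

lemma convex_on_GDERIV_is_arg_min_iff:
  fixes G :: "'a::real_inner \<Rightarrow> real"
  assumes convex: "convex_on UNIV G" and grad: "GDERIV G z :> g"
  shows "is_arg_min G (\<lambda>_. True) z \<longleftrightarrow> g = 0"
proof
  assume "is_arg_min G (\<lambda>_. True) z"
  then have "\<forall>y. G z \<le> G y" by (auto simp: is_arg_min_def not_less)
  with grad have "(\<lambda>h. inner h g) = (\<lambda>h. 0)"
    unfolding gderiv_def by (intro has_derivative_local_min) (auto intro: always_eventually)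
  then have "inner g g = 0" by metis
  then show "g = 0" by simp
next
  assume "g = 0"
  with grad have "G z \<le> G y" for y
    using convex_on_imp_above_linearization[OF convex, of "\<lambda>h. inner h g" z y]
    by (simp add: gderiv_def)
  then show "is_arg_min G (\<lambda>_. True) z"
    by (simp add: is_arg_min_def not_less)
qed

lemma GDERIV_cmult: "GDERIV f x :> df \<Longrightarrow> GDERIV (\<lambda>x. c * f x) x :> c *\<^sub>R df"
  using GDERIV_mult[OF GDERIV_const] by simp

lemma GDERIV_norm_power2_affine:
  assumes "bounded_linear L" and adjoint: "\<And>h v. inner (L h) v = inner h (L' v)"
  shows "GDERIV (\<lambda>y. (norm (L y - w))\<^sup>2) z :> 2 *\<^sub>R L' (L z - w)"
proof -
  have "((\<lambda>y. inner (L y - w) (L y - w)) has_derivative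
      (\<lambda>h. inner (L z - w) (L h - 0) + inner (L h - 0) (L z - w))) (at z)"
    by (intro has_derivative_inner has_derivative_diff bounded_linear_imp_has_derivative assms
        has_derivative_const)
  then show ?thesis
    by (simp add: gderiv_def power2_norm_eq_inner adjoint inner_commute)
qed

lemma GDERIV_inner_affine:
  assumes "bounded_linear L" and adjoint: "\<And>h v. inner (L h) v = inner h (L' v)"
  shows "GDERIV (\<lambda>y. inner p (L y - w)) z :> L' p"
proof -
  have "((\<lambda>y. inner p (L y - w)) has_derivative (\<lambda>h. inner p (L h - 0))) (at z)"
    by (intro has_derivative_inner_right has_derivative_diff bounded_linear_imp_has_derivative assms
        has_derivative_const)
  moreover have "inner p (L h) = inner h (L' p)" for h
    by (metis adjoint inner_commute)
  ultimately show ?thesis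
    by (simp add: gderiv_def)
qed

lemma inner_matrix_vector_transpose:
  fixes M :: "real^'n^'m"
  shows "inner (M *v h) v = inner h (transpose M *v v)"
  by (metis dot_lmul_matrix inner_commute transpose_matrix_vector)

lemma convex_on_alg_obj:
  fixes A :: "real^'n^'m"
  assumes "convex_on UNIV F" and "\<gamma> > 0" and "\<delta> \<ge> 0" and "\<beta> \<ge> 0"
  shows "convex_on UNIV (alg_obj F t \<eta> \<gamma> \<delta> \<beta> A b x lam k)"
proof -
  have "linear (\<lambda>y. alg_c t \<eta> k *\<^sub>R (A *v y))"
    by (simp add: bounded_linear.linear bounded_linear_compose[OF bounded_linear_scaleR_right])
  moreover have "linear (\<lambda>y. inner p y)" for p :: "real^'m"
    by (rule bounded_linear.linear[OF bounded_linear_inner_right])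
  ultimately show ?thesis
    unfolding alg_obj_def using assms
    by (intro convex_on_add convex_on_cmul
        convex_on_compose_affine[OF convex_on_power2_norm]
        convex_on_compose_affine[OF convex_on_power2_norm, where L = "\<lambda>y. y"]
        convex_on_compose_affine[OF linear_imp_convex_on]
        bounded_linear.linear[OF matrix_vector_mul_bounded_linear] linear_ident) auto
qed

lemma GDERIV_alg_obj:
  fixes A :: "real^'n^'m" and b :: "real^'m" and x :: "nat \<Rightarrow> real^'n"
    and t :: "nat \<Rightarrow> real" and \<eta> :: real and k :: nat
  assumes "GDERIV F z :> D"
  defines "c \<equiv> alg_c t \<eta> k" and "r \<equiv> alg_r t \<eta> A b x k"
  shows "GDERIV (alg_obj F t \<eta> \<gamma> \<delta> \<beta> A b x lam k) z :>
    D + \<beta> *\<^sub>R (transpose A *v (A *v z - b)) + (1 / \<gamma>) *\<^sub>R (z - alg_bar t x k)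
      + transpose A *v (alg_p t \<eta> lam k + (\<delta> * c) *\<^sub>R (c *\<^sub>R (A *v z) - r))"
proof -
  have adjoint_cA: "inner (c *\<^sub>R (A *v h)) v = inner h (c *\<^sub>R (transpose A *v v))" for h v
    by (simp add: inner_matrix_vector_transpose)
  have "bounded_linear (\<lambda>y. c *\<^sub>R (A *v y))"
    by (simp add: bounded_linear_compose[OF bounded_linear_scaleR_right])
  then have "GDERIV (alg_obj F t \<eta> \<gamma> \<delta> \<beta> A b x lam k) z :>
    D + (\<beta> / 2) *\<^sub>R (2 *\<^sub>R (transpose A *v (A *v z - b)))
      + (1 / (2 * \<gamma>)) *\<^sub>R (2 *\<^sub>R (z - alg_bar t x k))
      + transpose A *v alg_p t \<eta> lam k
      + (\<delta> / 2) *\<^sub>R (2 *\<^sub>R (c *\<^sub>R (transpose A *v (c *\<^sub>R (A *v z) - r))))"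
    unfolding alg_obj_def c_def[symmetric] r_def[symmetric]
    by (intro GDERIV_add GDERIV_cmult assms
        GDERIV_norm_power2_affine[OF _ inner_matrix_vector_transpose]
        GDERIV_norm_power2_affine[OF _ adjoint_cA]
        GDERIV_norm_power2_affine[where L = "\<lambda>y. y" and L' = "\<lambda>v. v"]
        GDERIV_inner_affine[OF _ inner_matrix_vector_transpose]
        bounded_linear_ident matrix_vector_mul_bounded_linear)
      simp_all
  then show ?thesis
    by (rule GDERIV_subst) (simp add: matrix_vector_right_distrib matrix_vector_mult_scaleR)
qed

lemma alg_c_eq_alg_alpha_plus_1: "\<eta> \<noteq> 0 \<Longrightarrow> alg_c t \<eta> k = alg_alpha t \<eta> k + 1"
  by (simp add: alg_c_def alg_alpha_def field_simps)

lemma alg_c_scaleR_minus_alg_r: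
  "\<eta> \<noteq> 0 \<Longrightarrow> alg_c t \<eta> k *\<^sub>R (A *v z) - alg_r t \<eta> A b x k
     = A *v z - b + alg_alpha t \<eta> k *\<^sub>R (A *v (z - x k))"
  by (simp add: alg_c_eq_alg_alpha_plus_1 alg_r_def matrix_vector_right_distrib algebra_simps)

lemma alg_p_plus_multiplier_step:
  assumes "\<eta> \<noteq> 0" and "lam (Suc k) = alg_lam_update t \<eta> \<delta> A b x lam k"
  shows "alg_p t \<eta> lam k
      + (\<delta> * alg_c t \<eta> k) *\<^sub>R (alg_c t \<eta> k *\<^sub>R (A *v x (Suc k)) - alg_r t \<eta> A b x k)
    = lam (Suc k) + alg_alpha t \<eta> k *\<^sub>R (lam (Suc k) - lam k)"
proof -
  define u where "u = alg_c t \<eta> k *\<^sub>R (A *v x (Suc k)) - alg_r t \<eta> A b x k"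
  have "alg_p t \<eta> lam k + (\<delta> * alg_c t \<eta> k) *\<^sub>R u
      = alg_c t \<eta> k *\<^sub>R (alg_bar t lam k + \<delta> *\<^sub>R u) - alg_alpha t \<eta> k *\<^sub>R lam k"
    by (simp add: alg_p_def algebra_simps)
  also have "\<dots> = alg_c t \<eta> k *\<^sub>R lam (Suc k) - alg_alpha t \<eta> k *\<^sub>R lam k"
    using assms(2) by (simp add: alg_lam_update_def u_def)
  also have "\<dots> = lam (Suc k) + alg_alpha t \<eta> k *\<^sub>R (lam (Suc k) - lam k)"
    using assms(1) by (simp add: alg_c_eq_alg_alpha_plus_1 algebra_simps)
  finally show ?thesis
    unfolding u_def .
qed

lemma add_inverse_scaleR_eq_0_iff:
  fixes u v :: "'a::real_vector"
  assumes "\<gamma> \<noteq> 0"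
  shows "u + (1 / \<gamma>) *\<^sub>R v = 0 \<longleftrightarrow> v = - \<gamma> *\<^sub>R u"
  using assms by (auto simp: add_eq_0_iff2)

lemma alg_step_iff_equations:
  fixes F :: "real^'n \<Rightarrow> real" and A :: "real^'n^'m"
  assumes convex: "convex_on UNIV F" and grad: "\<And>y. GDERIV F y :> D y"
    and "\<gamma> > 0" and "\<delta> \<ge> 0" and "\<beta> \<ge> 0" and "\<eta> \<noteq> 0"
  shows "(is_arg_min (alg_obj F t \<eta> \<gamma> \<delta> \<beta> A b x lam k) (\<lambda>_. True) (x (Suc k))
          \<and> lam (Suc k) = alg_lam_update t \<eta> \<delta> A b x lam k)
    \<longleftrightarrow> (x (Suc k) - alg_bar t x k =
          - \<gamma> *\<^sub>R (D (x (Suc k))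
              + transpose A *v (lam (Suc k) + alg_alpha t \<eta> k *\<^sub>R (lam (Suc k) - lam k))
              + \<beta> *\<^sub>R (transpose A *v (A *v x (Suc k) - b)))
        \<and> lam (Suc k) - alg_bar t lam k =
          \<delta> *\<^sub>R (A *v x (Suc k) - b + alg_alpha t \<eta> k *\<^sub>R (A *v (x (Suc k) - x k))))"
    (is "(?min \<and> ?update) \<longleftrightarrow> (?step_x \<and> ?step_lam)")
proof -
  have update_iff: "?update \<longleftrightarrow> ?step_lam"
    using \<open>\<eta> \<noteq> 0\<close>
    by (auto simp: alg_lam_update_def alg_c_scaleR_minus_alg_r diff_eq_eq add.commute)
  have "?min \<longleftrightarrow> ?step_x" if ?update
  proof -
    define S where "S = D (x (Suc k))
      + transpose A *v (lam (Suc k) + alg_alpha t \<eta> k *\<^sub>R (lam (Suc k) - lam k))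
      + \<beta> *\<^sub>R (transpose A *v (A *v x (Suc k) - b))"
    have "GDERIV (alg_obj F t \<eta> \<gamma> \<delta> \<beta> A b x lam k) (x (Suc k)) :>
        S + (1 / \<gamma>) *\<^sub>R (x (Suc k) - alg_bar t x k)"
      using GDERIV_alg_obj[OF grad[of "x (Suc k)"], where t = t and \<eta> = \<eta> and k = k
          and A = A and b = b and x = x and lam = lam and \<beta> = \<beta> and \<gamma> = \<gamma> and \<delta> = \<delta>]
      unfolding alg_p_plus_multiplier_step[OF \<open>\<eta> \<noteq> 0\<close> that] S_def
      by (simp add: ac_simps)
    then have "?min \<longleftrightarrow> S + (1 / \<gamma>) *\<^sub>R (x (Suc k) - alg_bar t x k) = 0"
      using assms by (intro convex_on_GDERIV_is_arg_min_iff convex_on_alg_obj)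
    also have "\<dots> \<longleftrightarrow> ?step_x"
      using \<open>\<gamma> > 0\<close> by (simp add: add_inverse_scaleR_eq_0_iff S_def)
    finally show ?thesis .
  qed
  with update_iff show ?thesis
    by blast
qed

lemma alg_generated_iff_alg_equations:
  fixes Fk :: "nat \<Rightarrow> real^'n \<Rightarrow> real" and A :: "real^'n^'m"
  assumes "\<And>k. convex_on UNIV (Fk k)" and "\<And>k y. GDERIV (Fk k) y :> Dk k y"
    and "\<gamma> > 0" and "\<delta> \<ge> 0" and "\<beta> \<ge> 0" and "\<eta> \<noteq> 0"
  shows "alg_generated Fk t \<eta> \<gamma> \<delta> \<beta> A b x lam
    \<longleftrightarrow> alg_equations (\<lambda>k. Dk k (x (Suc k))) t \<eta> \<gamma> \<delta> \<beta> A b x lam"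
  unfolding alg_generated_def alg_equations_def
  by (simp only: alg_step_iff_equations[OF assms])

theorem proposition2p1:
  fixes f :: "real^'n \<Rightarrow> real" and df :: "real^'n \<Rightarrow> real^'n"
    and A :: "real^'n^'m" and b :: "real^'m"
    and t :: "nat \<Rightarrow> real" and \<rho> \<eta> \<gamma> \<delta> \<beta> L :: real
    and x :: "nat \<Rightarrow> real^'n" and lam :: "nat \<Rightarrow> real^'m"
  assumes f_convex: "convex_on UNIV f"
    and f_grad: "\<And>y. GDERIV f y :> df y"
    and df_cont: "continuous_on UNIV df"
    and t_mono: "\<And>k. k \<ge> 1 \<Longrightarrow> t k \<le> t (Suc k)"
    and t1: "t 1 = 1"
    and t_gt: "\<And>k. k > 2 \<Longrightarrow> t k > 1"
    and t_lim: "filterlim t at_top sequentially"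
    and t_rate: "\<And>k. k \<ge> 1 \<Longrightarrow> (t (Suc k))\<^sup>2 - (t k)\<^sup>2 \<le> \<rho> * t (Suc k)"
    and rho: "0 < \<rho>" "\<rho> \<le> 1"
    and eta: "\<rho> \<le> \<eta>" "\<eta> \<le> 1"
    and gamma: "\<gamma> > 0" and delta: "\<delta> > 0" and beta: "\<beta> \<ge> 0"
    and init: "x 0 = x 1" "lam 0 = lam 1"
  shows "(alg_generated (\<lambda>k. f) t \<eta> \<gamma> \<delta> \<beta> A b x lam
            \<longleftrightarrow> alg_equations (\<lambda>k. df (x (Suc k))) t \<eta> \<gamma> \<delta> \<beta> A b x lam)
       \<and> ((L > 0 \<and> (\<forall>y z. norm (df y - df z) \<le> L * norm (y - z)) \<and> \<gamma> \<le> 1 / L) \<longrightarrow>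
           (alg_generated (\<lambda>k y. inner (df (alg_bar t x k)) y) t \<eta> \<gamma> \<delta> \<beta> A b x lam
            \<longleftrightarrow> alg_equations (\<lambda>k. df (alg_bar t x k)) t \<eta> \<gamma> \<delta> \<beta> A b x lam))"
proof -
  have "\<eta> \<noteq> 0" "\<delta> \<ge> 0"
    using rho eta delta by auto
  note characterization = alg_generated_iff_alg_equations[OF _ _ gamma \<open>\<delta> \<ge> 0\<close> beta \<open>\<eta> \<noteq> 0\<close>]
  have linearized_convex: "convex_on UNIV (\<lambda>y. inner (df (alg_bar t x k)) y)" for k
    by (rule linear_imp_convex_on[OF bounded_linear.linear[OF bounded_linear_inner_right]])
  have linearized_grad: "GDERIV (\<lambda>y. inner (df (alg_bar t x k)) y) y :> df (alg_bar t x k)" for k y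
    unfolding gderiv_def by (auto intro!: derivative_eq_intros simp: inner_commute)
  show ?thesis
    using characterization[where Fk = "\<lambda>k. f" and Dk = "\<lambda>k. df", OF f_convex f_grad]
      characterization[where Fk = "\<lambda>k y. inner (df (alg_bar t x k)) y"
        and Dk = "\<lambda>k y. df (alg_bar t x k)", OF linearized_convex linearized_grad]
    by blast
qed

end
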